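(* Let $n\ge 2$ and $q$ a prime power. The association scheme $\mathcal X(GU(n,q),\Phi(n,q))$ is commutative (i.e., $p_{ij}^h=p_{ji}^h$ for all $h,i,j$) if and only if $q=2$.
   Context: $\Phi(n,q)=\{x\in\mathbb{F}_{q^2}^n\setminus\{0\}:\langle x,x\rangle=0\}$ with $\langle x,y\rangle=\sum_k x_k y_k^{\,q}$. $\mathcal X(GU(n,q),\Phi(n,q))$ is the Schurian association scheme on $\Phi(n,q)$ whose relations are the orbitals (orbits on $\Phi(n,q)\times\Phi(n,q)$) of $GU(n,q)=\{U\in GL_n(\mathbb{F}_{q^2}):U\bar U^T=I\}$ acting by $x\mapsto xU$. For relations $R_h,R_i,R_j$, $p_{ij}^h=|\{z:(x,z)\in R_i,(z,y)\in R_j\}|$ for any $(x,y)\in R_h$. *)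

theory Defs
  imports "HOL-Analysis.Finite_Cartesian_Product" "HOL-Computational_Algebra.Primes"
begin

text \<open>The field F_{q^2} is modelled by a finite field type 'a with CARD('a) = q^2;
  vectors of length n by 'a^'n with CARD('n) = n; conjugation is x \<mapsto> x^q.\<close>

definition prime_power :: "nat \<Rightarrow> bool" where
  "prime_power q \<longleftrightarrow> (\<exists>p k. prime p \<and> k \<ge> 1 \<and> q = p ^ k)"

definition herm :: "nat \<Rightarrow> 'a::field ^ 'n \<Rightarrow> 'a ^ 'n \<Rightarrow> 'a" where
  "herm q x y = (\<Sum>k\<in>UNIV. x $ k * (y $ k) ^ q)"

definition Phi :: "nat \<Rightarrow> ('a::field ^ 'n) set" where
  "Phi q = {x. x \<noteq> 0 \<and> herm q x x = 0}"

definition conj_transpose :: "nat \<Rightarrow> 'a::field ^ 'n ^ 'n \<Rightarrow> 'a ^ 'n ^ 'n" where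
  "conj_transpose q U = (\<chi> i j. (U $ j $ i) ^ q)"

definition GU :: "nat \<Rightarrow> ('a::field ^ 'n ^ 'n) set" where
  "GU q = {U. U ** conj_transpose q U = mat 1}"

definition orbital :: "nat \<Rightarrow> 'a::field ^ 'n \<Rightarrow> 'a ^ 'n \<Rightarrow> (('a ^ 'n) \<times> ('a ^ 'n)) set" where
  "orbital q x y = {(x v* U, y v* U) | U. U \<in> (GU q :: ('a ^ 'n ^ 'n) set)}"

definition orbitals :: "nat \<Rightarrow> (('a::field ^ 'n) \<times> ('a ^ 'n)) set set" where
  "orbitals q = {orbital q x y | x y. x \<in> Phi q \<and> y \<in> Phi q}"

text \<open>Intersection number p_{ij}^h, computed at a chosen pair (x,y) in R_h.\<close>
definition isect_num :: "nat \<Rightarrow> (('a::field ^ 'n) \<times> ('a ^ 'n)) set \<Rightarrow>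
    (('a ^ 'n) \<times> ('a ^ 'n)) set \<Rightarrow> (('a ^ 'n) \<times> ('a ^ 'n)) set \<Rightarrow> nat" where
  "isect_num q Rh Ri Rj = (let (x, y) = (SOME p. p \<in> Rh) in
     card {z \<in> Phi q. (x, z) \<in> Ri \<and> (z, y) \<in> Rj})"

definition commutative_scheme :: "nat \<Rightarrow> ('a::field ^ 'n) itself \<Rightarrow> bool" where
  "commutative_scheme q T \<longleftrightarrow>
     (\<forall>Rh \<in> (orbitals q :: (('a ^ 'n) \<times> ('a ^ 'n)) set set). \<forall>Ri \<in> orbitals q. \<forall>Rj \<in> orbitals q.
        isect_num q Rh Ri Rj = isect_num q Rh Rj Ri)"

end

theory Submission
  imports Defs "HOL-Analysis.Cartesian_Space" "HOL-Number_Theory.Residues"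
    "HOL-Computational_Algebra.Polynomial"
begin

text \<open>
  For \<open>q > 2\<close> take isotropic \<open>x, y\<close> with \<open>\<langle>x, y\<rangle> \<noteq> 0\<close> and \<open>\<lambda>\<close> with \<open>\<lambda>\<^sup>q\<^sup>+\<^sup>1 \<noteq> 1\<close>, and let
  \<open>R\<^sub>i \<ni> (x, \<lambda> x)\<close>, \<open>R\<^sub>j \<ni> (\<lambda> x, y)\<close>. The point \<open>\<lambda> x\<close> is a path of type \<open>(i, j)\<close> from \<open>x\<close>
  to \<open>y\<close>, but a path \<open>x, w, y\<close> of type \<open>(j, i)\<close> would force \<open>y = \<lambda> w\<close> and
  \<open>\<langle>x, w\<rangle> = \<lambda> \<langle>x, y\<rangle>\<close>, hence \<open>\<langle>x, y\<rangle> = \<lambda>\<^sup>q\<^sup>+\<^sup>1 \<langle>x, y\<rangle>\<close>.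

  For \<open>q = 2\<close> let \<open>\<sigma>\<close> raise every coordinate to the square, so that
  \<open>\<langle>\<sigma> y, \<sigma> x\<rangle> = \<langle>x, y\<rangle>\<close>. Over \<open>\<F>\<^sub>4\<close> every orthonormal family extends to an
  orthonormal basis, and every pair of isotropic vectors has a normal form in such a
  basis that is determined by its proportionality factor, if any, and by \<open>\<langle>x, y\<rangle>\<close>.
  Comparing the normal forms of \<open>(x, y)\<close> and \<open>(\<sigma> y, \<sigma> x)\<close> gives a unitary matrix
  mapping one pair to the other, so \<open>\<sigma>\<close> maps every orbital onto its transpose, and
  \<open>z \<mapsto> \<sigma> z\<close> matches the paths counted by \<open>p\<^sub>i\<^sub>j\<^sup>h\<close> with those counted by \<open>p\<^sub>j\<^sub>i\<^sup>h\<close>.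
\<close>

section \<open>Finite fields\<close>

text \<open>The library's \<open>finite_field_power_card_eq_same\<close> needs the class \<open>finite_field\<close>,
  which a type of sort \<open>{field, finite}\<close> is not known to belong to.\<close>

lemma power_card_minus_one_eq_one:
  fixes x :: "'a::{field,finite}"
  assumes "x \<noteq> 0"
  shows "x ^ (CARD('a) - 1) = 1"
proof -
  let ?U = "UNIV - {0::'a}"
  have "x ^ card ?U * (\<Prod>y\<in>?U. y) = (\<Prod>y\<in>?U. x * y)"
    by (simp add: prod.distrib)
  also have "\<dots> = (\<Prod>y\<in>?U. y)"
    by (rule prod.reindex_bij_witness[of _ "\<lambda>y. y / x" "\<lambda>y. x * y"]) (use assms in auto)
  finally show ?thesis
    by (simp add: card_Diff_subset)
qed

lemma power_card_eq_self:
  fixes x :: "'a::{field,finite}"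
  shows "x ^ CARD('a) = x"
proof (cases "x = 0")
  case False
  have "CARD('a) = Suc (CARD('a) - 1)"
    using finite_UNIV_card_ge_0[where 'a='a] by simp
  then have "x ^ CARD('a) = x * x ^ (CARD('a) - 1)"
    by (metis power_Suc)
  also have "\<dots> = x"
    using power_card_minus_one_eq_one[OF False] by simp
  finally show ?thesis .
qed simp

lemma card_roots_power_eq_le:
  fixes b :: "'a::field"
  assumes "d > 0"
  shows "card {x. x ^ d = b} \<le> d"
proof -
  define p where "p = monom (1::'a) d + [:-b:]"
  have deg: "degree p = d"
    unfolding p_def using assms by (subst degree_add_eq_left) (auto simp: degree_monom_eq)
  have "{x. poly p x = 0} = {x. x ^ d = b}"
    by (simp add: p_def poly_monom)
  then show ?thesis
    using card_poly_roots_bound[of p] deg assms by fastforce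
qed

text \<open>Every fibre of \<open>a \<mapsto> a ^ d\<close> has at most \<open>d\<close> points, so there are at least \<open>e\<close>
  \<open>d\<close>-th powers of units, and at most \<open>e\<close> roots of \<open>b ^ e = 1\<close>.\<close>
lemma power_image_eq_roots_of_unity:
  fixes d e :: nat
  assumes de: "d * e = CARD('a::{field,finite}) - 1" and "d > 0" "e > 0"
  shows "(\<lambda>a::'a. a ^ d) ` (UNIV - {0}) = {b. b ^ e = 1}"
    and "card {b::'a. b ^ e = 1} = e"
proof -
  let ?R = "{b::'a. b ^ e = 1}" and ?I = "(\<lambda>a::'a. a ^ d) ` (UNIV - {0})"
  have sub: "?I \<subseteq> ?R"
  proof
    fix b assume "b \<in> ?I"
    then obtain a where "a \<noteq> 0" "b = a ^ d" by auto
    then show "b \<in> ?R"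
      using power_card_minus_one_eq_one[of a] by (simp add: de flip: power_mult)
  qed
  have "d * e = card (UNIV - {0::'a})"
    by (simp add: de card_Diff_subset)
  also have "\<dots> \<le> card (\<Union>b\<in>?I. {a::'a. a ^ d = b})"
    by (intro card_mono) auto
  also have "\<dots> \<le> (\<Sum>b\<in>?I. card {a::'a. a ^ d = b})"
    by (rule card_UN_le) simp
  also have "\<dots> \<le> (\<Sum>b\<in>?I. d)"
    by (intro sum_mono card_roots_power_eq_le \<open>d > 0\<close>)
  also have "\<dots> = card ?I * d"
    by simp
  finally have "e \<le> card ?I"
    using \<open>d > 0\<close> by (simp add: mult.commute)
  moreover have "card ?R \<le> e"
    by (rule card_roots_power_eq_le) fact
  ultimately have "card ?R \<le> card ?I"
    by simp
  then show eq: "?I = ?R"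
    using card_seteq[OF finite sub] by simp
  show "card ?R = e"
    using \<open>e \<le> card ?I\<close> \<open>card ?R \<le> e\<close> eq by simp
qed

lemma CHAR_eq_prime_if_card_prime_power:
  assumes "prime p" and "CARD('a::{field,finite}) = p ^ m"
  shows "CHAR('a) = p"
proof -
  have prime_CHAR: "prime CHAR('a)"
    by (rule prime_CHAR_semidom, rule finite_imp_CHAR_pos) simp
  have "CHAR('a) dvd p ^ m"
    using CHAR_dvd_CARD[where 'a='a] assms(2) by simp
  then have "CHAR('a) dvd p"
    using prime_dvd_power[OF prime_CHAR] by blast
  then show ?thesis
    using primes_dvd_imp_eq[OF prime_CHAR assms(1)] by simp
qed

lemma prime_power_ge_2:
  assumes "prime_power q"
  shows "q \<ge> 2"
proof -
  obtain p k where "prime p" "k \<ge> 1" "q = p ^ k"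
    using assms by (auto simp: prime_power_def)
  then show ?thesis
    using power_increasing[of 1 k p] prime_ge_2_nat[of p] by simp
qed

lemma power_add_prime_power:
  assumes "prime_power q" and "CARD('a::{field,finite}) = q ^ 2"
  shows "((a::'a) + b) ^ q = a ^ q + b ^ q"
proof -
  obtain p k where p: "prime p" and q: "q = p ^ k"
    using assms(1) by (auto simp: prime_power_def)
  have "CHAR('a) = p"
    using CHAR_eq_prime_if_card_prime_power[OF p] assms(2) by (simp add: q flip: power_mult)
  then show ?thesis
    using freshmans_dream'[where 'a='a and n=k] p q by simp
qed

section \<open>The Hermitian form and the unitary group\<close>

text \<open>Throughout, \<open>frob\<close> says that \<open>a \<mapsto> a ^ q\<close> is additive, and \<open>inv\<close> that it is an
  involution; both hold when \<open>CARD('a) = q\<^sup>2\<close> for a prime power \<open>q\<close>.\<close>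

lemma sum_power_additive:
  fixes f :: "'b \<Rightarrow> 'a::comm_semiring_1"
  assumes frob: "\<And>a b::'a. (a + b) ^ q = a ^ q + b ^ q" and "q > 0"
  shows "sum f A ^ q = (\<Sum>i\<in>A. f i ^ q)"
  by (induct A rule: infinite_finite_induct) (use assms in \<open>auto simp: power_0_left\<close>)

lemma herm_add_left: "herm q (x + y) z = herm q x z + herm q y z"
  by (simp add: herm_def distrib_right sum.distrib)

lemma herm_diff_left: "herm q (x - y) z = herm q x z - herm q y z"
  by (simp add: herm_def left_diff_distrib sum_subtractf)

lemma herm_smult_left: "herm q (c *s x) y = c * herm q x y"
  by (simp add: herm_def sum_distrib_left mult.assoc)

lemma herm_smult_right: "herm q x (c *s y) = c ^ q * herm q x y"
  by (simp add: herm_def sum_distrib_left power_mult_distrib mult_ac)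

lemma herm_zero_left [simp]: "herm q 0 x = 0"
  by (simp add: herm_def)

lemma herm_sum_left: "herm q (sum f A) z = (\<Sum>i\<in>A. herm q (f i) z)"
  by (induct A rule: infinite_finite_induct) (auto simp: herm_add_left)

lemma herm_zero_right: "q > 0 \<Longrightarrow> herm q x 0 = 0"
  by (simp add: herm_def zero_power)

lemma herm_add_right:
  assumes frob: "\<And>a b::'a::field. (a + b) ^ q = a ^ q + b ^ q"
  shows "herm q x (y + z) = herm q x y + herm q (x::'a^'n) z"
  by (simp add: herm_def frob distrib_left sum.distrib)

lemma herm_sum_right:
  assumes frob: "\<And>a b::'a::field. (a + b) ^ q = a ^ q + b ^ q" and "q > 0"
  shows "herm q z (sum f A) = (\<Sum>i\<in>A. herm q z (f i :: 'a^'n))"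
  by (induct A rule: infinite_finite_induct) (use assms in \<open>auto simp: herm_add_right herm_zero_right\<close>)

lemma herm_conj_sym:
  assumes frob: "\<And>a b::'a::field. (a + b) ^ q = a ^ q + b ^ q" and "q > 0"
    and inv: "\<And>a::'a. a ^ (q * q) = a"
  shows "herm q y x = herm q x (y::'a^'n) ^ q"
  by (simp add: herm_def sum_power_additive[OF frob \<open>q > 0\<close>] power_mult_distrib
      flip: power_mult) (simp add: inv mult.commute)

lemma herm_axis_axis:
  assumes "q > 0"
  shows "herm q (axis i a) (axis j b) = (if i = j then a * b ^ q else 0)"
proof -
  have "axis i a $ k * (axis j b $ k) ^ q = (if k = i \<and> i = j then a * b ^ q else 0)" for k
    using assms by (simp add: axis_def zero_power)
  then show ?thesis
    by (simp add: herm_def)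
qed

lemma herm_axis_right:
  assumes "q > 0"
  shows "herm q x (axis k 1) = x $ k"
proof -
  have "x $ i * (axis k 1 $ i) ^ q = (if i = k then x $ k else 0)" for i
    using assms by (simp add: axis_def zero_power)
  then show ?thesis
    by (simp add: herm_def)
qed

lemma GU_rows_orthonormal:
  assumes "U \<in> GU q"
  shows "(\<Sum>k\<in>UNIV. U $ i $ k * (U $ j $ k) ^ q) = (if i = j then 1 else 0)"
proof -
  have "(U ** conj_transpose q U) $ i $ j = mat 1 $ i $ j"
    using assms by (simp add: GU_def)
  then show ?thesis
    by (simp add: matrix_matrix_mult_def conj_transpose_def mat_def)
qed

lemma herm_vector_matrix_GU:
  fixes x y :: "'a::field ^ 'n"
  assumes frob: "\<And>a b::'a. (a + b) ^ q = a ^ q + b ^ q" and "q > 0" and U: "U \<in> GU q"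
  shows "herm q (x v* U) (y v* U) = herm q x y"
proof -
  have "herm q (x v* U) (y v* U) =
      (\<Sum>k\<in>UNIV. (\<Sum>i\<in>UNIV. x $ i * U $ i $ k) * (\<Sum>j\<in>UNIV. (y $ j) ^ q * (U $ j $ k) ^ q))"
    by (simp add: herm_def vector_matrix_mult_def sum_power_additive[OF frob \<open>q > 0\<close>]
        power_mult_distrib)
  also have "\<dots> = (\<Sum>k\<in>UNIV. \<Sum>j\<in>UNIV. \<Sum>i\<in>UNIV. x $ i * (y $ j) ^ q * (U $ i $ k * (U $ j $ k) ^ q))"
    by (simp add: sum_distrib_left sum_distrib_right mult_ac)
  also have "\<dots> = (\<Sum>j\<in>UNIV. \<Sum>i\<in>UNIV. \<Sum>k\<in>UNIV. x $ i * (y $ j) ^ q * (U $ i $ k * (U $ j $ k) ^ q))"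
    by (subst sum.swap) (rule sum.cong[OF refl], rule sum.swap)
  also have "\<dots> = herm q x y"
    by (simp add: GU_rows_orthonormal[OF U] herm_def if_distrib flip: sum_distrib_left cong: if_cong)
  finally show ?thesis .
qed

lemma vector_matrix_conj_transpose_GU:
  "U \<in> GU q \<Longrightarrow> x v* U v* conj_transpose q U = x"
  by (simp add: vector_matrix_mul_assoc GU_def)

lemma mat_1_in_GU:
  assumes "q > 0"
  shows "(mat 1 :: 'a::field^'n^'n) \<in> GU q"
proof -
  have "conj_transpose q (mat 1 :: 'a^'n^'n) = mat 1"
    using assms by (auto simp: conj_transpose_def mat_def vec_eq_iff)
  then show ?thesis
    by (simp add: GU_def)
qed

lemma conj_transpose_matrix_mult:
  fixes U V :: "'a::field^'n^'n"
  assumes frob: "\<And>a b::'a. (a + b) ^ q = a ^ q + b ^ q" and "q > 0"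
  shows "conj_transpose q (U ** V) = conj_transpose q V ** conj_transpose q U"
  by (simp add: conj_transpose_def matrix_matrix_mult_def vec_eq_iff
      sum_power_additive[OF frob \<open>q > 0\<close>] power_mult_distrib mult.commute)

lemma GU_matrix_mult:
  fixes U V :: "'a::field^'n^'n"
  assumes frob: "\<And>a b::'a. (a + b) ^ q = a ^ q + b ^ q" and "q > 0"
    and "U \<in> GU q" "V \<in> GU q"
  shows "U ** V \<in> GU q"
proof -
  have "U ** V ** conj_transpose q (U ** V) = U ** (V ** conj_transpose q V) ** conj_transpose q U"
    by (simp add: conj_transpose_matrix_mult[OF frob \<open>q > 0\<close>] matrix_mul_assoc)
  then show ?thesis
    using assms(3,4) by (simp add: GU_def)
qed

lemma conj_transpose_conj_transpose:
  fixes U :: "'a::field^'n^'n"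
  assumes inv: "\<And>a::'a. a ^ (q * q) = a"
  shows "conj_transpose q (conj_transpose q U) = U"
  by (simp add: conj_transpose_def vec_eq_iff inv flip: power_mult)

lemma conj_transpose_in_GU:
  fixes U :: "'a::field^'n^'n"
  assumes inv: "\<And>a::'a. a ^ (q * q) = a" and "U \<in> GU q"
  shows "conj_transpose q U \<in> GU q"
  using assms matrix_left_right_inverse by (auto simp: GU_def conj_transpose_conj_transpose)

lemma vector_matrix_GU_in_Phi:
  fixes x :: "'a::field ^ 'n"
  assumes frob: "\<And>a b::'a. (a + b) ^ q = a ^ q + b ^ q" and "q > 0"
    and U: "U \<in> GU q" and x: "x \<in> Phi q"
  shows "x v* U \<in> Phi q"
proof -
  have "x v* U \<noteq> 0"
    using vector_matrix_conj_transpose_GU[OF U, of x] x by (auto simp: Phi_def)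
  then show ?thesis
    using x herm_vector_matrix_GU[OF frob \<open>q > 0\<close> U] by (simp add: Phi_def)
qed

section \<open>Orbitals and intersection numbers\<close>

lemma pair_in_orbital: "q > 0 \<Longrightarrow> (x, y) \<in> orbital q x (y::'a::field^'n)"
  unfolding orbital_def by (auto intro!: exI[of _ "mat 1"] mat_1_in_GU)

lemma orbital_vector_matrix_GU:
  fixes x y p r :: "'a::field^'n"
  assumes frob: "\<And>a b::'a. (a + b) ^ q = a ^ q + b ^ q" and "q > 0"
    and "(p, r) \<in> orbital q x y" and U: "U \<in> GU q"
  shows "(p v* U, r v* U) \<in> orbital q x y"
proof -
  obtain V where V: "V \<in> GU q" "p = x v* V" "r = y v* V"
    using assms(3) unfolding orbital_def by auto
  have "V ** U \<in> GU q"
    by (rule GU_matrix_mult[OF frob \<open>q > 0\<close> V(1) U])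
  then show ?thesis
    unfolding orbital_def using V by (auto simp: vector_matrix_mul_assoc)
qed

lemma orbitals_vector_matrix_GU:
  fixes R :: "(('a::field^'n) \<times> ('a^'n)) set"
  assumes frob: "\<And>a b::'a. (a + b) ^ q = a ^ q + b ^ q" and "q > 0"
    and "R \<in> orbitals q" "(p, r) \<in> R" "U \<in> GU q"
  shows "(p v* U, r v* U) \<in> R"
  using assms orbital_vector_matrix_GU[OF frob \<open>q > 0\<close>] by (auto simp: orbitals_def)

lemma orbitals_subset_Phi:
  fixes R :: "(('a::field^'n) \<times> ('a^'n)) set"
  assumes frob: "\<And>a b::'a. (a + b) ^ q = a ^ q + b ^ q" and "q > 0"
    and "R \<in> orbitals q" "(p, r) \<in> R"
  shows "p \<in> Phi q" "r \<in> Phi q"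
  using assms vector_matrix_GU_in_Phi[OF frob \<open>q > 0\<close>]
  by (auto simp: orbitals_def orbital_def)

text \<open>The intersection numbers of \<open>orbital q x y\<close> are computed at the pair chosen by
  \<open>SOME\<close>, which is an image of \<open>(x, y)\<close> under the unitary group.\<close>
lemma isect_num_orbital:
  fixes x y :: "'a::field^'n"
  assumes "q > 0"
  obtains U where "U \<in> GU q" and "\<And>Ri Rj. isect_num q (orbital q x y) Ri Rj =
    card {z \<in> Phi q. (x v* U, z) \<in> Ri \<and> (z, y v* U) \<in> Rj}"
proof -
  let ?s = "SOME p. p \<in> orbital q x y"
  have "?s \<in> orbital q x y"
    using pair_in_orbital[OF assms] by (rule someI)
  then obtain U where "U \<in> GU q" "?s = (x v* U, y v* U)"
    unfolding orbital_def by auto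
  then show ?thesis
    using that by (simp add: isect_num_def)
qed

lemma card_paths_vector_matrix_GU:
  fixes Ri Rj :: "(('a::field^'n) \<times> ('a^'n)) set"
  assumes frob: "\<And>a b::'a. (a + b) ^ q = a ^ q + b ^ q" and "q > 0"
    and inv: "\<And>a::'a. a ^ (q * q) = a"
    and Ri: "Ri \<in> orbitals q" and Rj: "Rj \<in> orbitals q" and U: "U \<in> GU q"
  shows "card {z \<in> Phi q. (p v* U, z) \<in> Ri \<and> (z, r v* U) \<in> Rj} =
    card {z \<in> Phi q. (p, z) \<in> Ri \<and> (z, r) \<in> Rj}"
proof -
  define V where "V = conj_transpose q U"
  have V: "V \<in> GU q"
    unfolding V_def by (rule conj_transpose_in_GU[OF inv U])
  have UV: "w v* U v* V = w" and VU: "w v* V v* U = w" for w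
    using vector_matrix_conj_transpose_GU[OF U] vector_matrix_conj_transpose_GU[OF V]
    by (simp_all add: V_def conj_transpose_conj_transpose[OF inv])
  note orb = orbitals_vector_matrix_GU[OF frob \<open>q > 0\<close>]
  note Phi = vector_matrix_GU_in_Phi[OF frob \<open>q > 0\<close>]
  have "bij_betw (\<lambda>z. z v* V)
      {z \<in> Phi q. (p v* U, z) \<in> Ri \<and> (z, r v* U) \<in> Rj} {z \<in> Phi q. (p, z) \<in> Ri \<and> (z, r) \<in> Rj}"
  proof (rule bij_betw_byWitness[where f' = "\<lambda>z. z v* U"])
    show "(\<lambda>z. z v* V) ` {z \<in> Phi q. (p v* U, z) \<in> Ri \<and> (z, r v* U) \<in> Rj}
        \<subseteq> {z \<in> Phi q. (p, z) \<in> Ri \<and> (z, r) \<in> Rj}"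
      using orb[OF Ri _ V] orb[OF Rj _ V] Phi[OF V] by (force simp: UV)
    show "(\<lambda>z. z v* U) ` {z \<in> Phi q. (p, z) \<in> Ri \<and> (z, r) \<in> Rj}
        \<subseteq> {z \<in> Phi q. (p v* U, z) \<in> Ri \<and> (z, r v* U) \<in> Rj}"
      using orb[OF Ri _ U] orb[OF Rj _ U] Phi[OF U] by blast
  qed (simp_all add: UV VU)
  then show ?thesis
    by (simp add: bij_betw_same_card)
qed

definition vec_conj :: "nat \<Rightarrow> 'a::field^'n \<Rightarrow> 'a^'n" where
  "vec_conj q v = (\<chi> k. (v $ k) ^ q)"

lemma vec_conj_vec_conj:
  assumes inv: "\<And>a::'a::field. a ^ (q * q) = a"
  shows "vec_conj q (vec_conj q v) = (v::'a^'n)"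
  by (simp add: vec_conj_def vec_eq_iff inv flip: power_mult)

lemma vec_conj_smult: "vec_conj q (c *s v) = c ^ q *s vec_conj q v"
  by (simp add: vec_conj_def vec_eq_iff power_mult_distrib)

lemma herm_vec_conj:
  assumes inv: "\<And>a::'a::field. a ^ (q * q) = a"
  shows "herm q (vec_conj q y) (vec_conj q x) = herm q x (y::'a^'n)"
  by (simp add: vec_conj_def herm_def inv mult.commute flip: power_mult)

lemma vec_conj_in_Phi:
  assumes inv: "\<And>a::'a::field. a ^ (q * q) = a" and x: "(x::'a^'n) \<in> Phi q"
  shows "vec_conj q x \<in> Phi q"
proof -
  have "vec_conj q x \<noteq> 0"
    using vec_conj_vec_conj[OF inv, of x] x by (auto simp: Phi_def vec_conj_def vec_eq_iff)
  then show ?thesis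
    using x herm_vec_conj[OF inv, of x x] by (simp add: Phi_def)
qed

lemma card_paths_vec_conj:
  fixes Ri Rj :: "(('a::field^'n) \<times> ('a^'n)) set"
  assumes inv: "\<And>a::'a. a ^ (q * q) = a"
    and Ri: "\<And>p r. (p, r) \<in> Ri \<Longrightarrow> (vec_conj q r, vec_conj q p) \<in> Ri"
    and Rj: "\<And>p r. (p, r) \<in> Rj \<Longrightarrow> (vec_conj q r, vec_conj q p) \<in> Rj"
  shows "card {z \<in> Phi q. (p, z) \<in> Ri \<and> (z, r) \<in> Rj} =
    card {z \<in> Phi q. (vec_conj q r, z) \<in> Rj \<and> (z, vec_conj q p) \<in> Ri}"
proof -
  note cc = vec_conj_vec_conj[OF inv]
  have "bij_betw (vec_conj q)
      {z \<in> Phi q. (p, z) \<in> Ri \<and> (z, r) \<in> Rj} {z \<in> Phi q. (vec_conj q r, z) \<in> Rj \<and> (z, vec_conj q p) \<in> Ri}"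
  proof (rule bij_betw_byWitness[where f' = "vec_conj q"])
    show "vec_conj q ` {z \<in> Phi q. (p, z) \<in> Ri \<and> (z, r) \<in> Rj}
        \<subseteq> {z \<in> Phi q. (vec_conj q r, z) \<in> Rj \<and> (z, vec_conj q p) \<in> Ri}"
    proof (rule image_subsetI)
      fix z assume "z \<in> {z \<in> Phi q. (p, z) \<in> Ri \<and> (z, r) \<in> Rj}"
      then have "vec_conj q z \<in> Phi q" "(vec_conj q z, vec_conj q p) \<in> Ri"
        "(vec_conj q r, vec_conj q z) \<in> Rj"
        using vec_conj_in_Phi[OF inv, of z] Ri[of p z] Rj[of z r] by simp_all
      then show "vec_conj q z \<in> {z \<in> Phi q. (vec_conj q r, z) \<in> Rj \<and> (z, vec_conj q p) \<in> Ri}"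
        by simp
    qed
    show "vec_conj q ` {z \<in> Phi q. (vec_conj q r, z) \<in> Rj \<and> (z, vec_conj q p) \<in> Ri}
        \<subseteq> {z \<in> Phi q. (p, z) \<in> Ri \<and> (z, r) \<in> Rj}"
    proof (rule image_subsetI)
      fix z assume "z \<in> {z \<in> Phi q. (vec_conj q r, z) \<in> Rj \<and> (z, vec_conj q p) \<in> Ri}"
      then have "vec_conj q z \<in> Phi q" "(p, vec_conj q z) \<in> Ri" "(vec_conj q z, r) \<in> Rj"
        using vec_conj_in_Phi[OF inv, of z] Ri[of z "vec_conj q p"] Rj[of "vec_conj q r" z]
        by (simp_all add: cc)
      then show "vec_conj q z \<in> {z \<in> Phi q. (p, z) \<in> Ri \<and> (z, r) \<in> Rj}"
        by simp
    qed
  qed (simp_all add: cc)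
  then show ?thesis
    by (simp add: bij_betw_same_card)
qed

lemma commutative_schemeI_vec_conj:
  assumes frob: "\<And>a b::'a::field. (a + b) ^ q = a ^ q + b ^ q" and "q > 0"
    and inv: "\<And>a::'a. a ^ (q * q) = a"
    and conj: "\<And>R p r. R \<in> (orbitals q :: (('a^'n) \<times> ('a^'n)) set set) \<Longrightarrow> (p, r) \<in> R \<Longrightarrow>
      (vec_conj q r, vec_conj q p) \<in> R"
  shows "commutative_scheme q TYPE('a^'n)"
  unfolding commutative_scheme_def
proof (intro ballI)
  fix Rh Ri Rj :: "(('a^'n) \<times> ('a^'n)) set"
  assume Rh: "Rh \<in> orbitals q" and Ri: "Ri \<in> orbitals q" and Rj: "Rj \<in> orbitals q"
  obtain x y where Rh_def: "Rh = orbital q x y"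
    using Rh by (auto simp: orbitals_def)
  obtain U where U: "U \<in> GU q"
    and isect: "\<And>Ri Rj. isect_num q Rh Ri Rj = card {z \<in> Phi q. (x v* U, z) \<in> Ri \<and> (z, y v* U) \<in> Rj}"
    using isect_num_orbital[OF \<open>q > 0\<close>] unfolding Rh_def by blast
  have "(x v* U, y v* U) \<in> Rh"
    unfolding Rh_def orbital_def using U by blast
  then have "(vec_conj q (y v* U), vec_conj q (x v* U)) \<in> Rh"
    by (rule conj[OF Rh])
  then obtain V where V: "V \<in> GU q" "vec_conj q (y v* U) = x v* V" "vec_conj q (x v* U) = y v* V"
    unfolding Rh_def orbital_def by auto
  note paths = card_paths_vector_matrix_GU[OF frob \<open>q > 0\<close> inv]
  have "isect_num q Rh Ri Rj =
      card {z \<in> Phi q. (vec_conj q (y v* U), z) \<in> Rj \<and> (z, vec_conj q (x v* U)) \<in> Ri}"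
    unfolding isect by (rule card_paths_vec_conj[OF inv conj[OF Ri] conj[OF Rj]])
  also have "\<dots> = card {z \<in> Phi q. (x, z) \<in> Rj \<and> (z, y) \<in> Ri}"
    unfolding V(2,3) by (rule paths[OF Rj Ri V(1)])
  also have "\<dots> = isect_num q Rh Rj Ri"
    unfolding isect by (rule paths[OF Rj Ri U, symmetric])
  finally show "isect_num q Rh Ri Rj = isect_num q Rh Rj Ri" .
qed

section \<open>Non-commutativity for \<open>q > 2\<close>\<close>

lemma isect_num_triangle_asymmetric:
  fixes x y :: "'a::{field,finite}^'n"
  assumes frob: "\<And>a b::'a. (a + b) ^ q = a ^ q + b ^ q" and "q > 0"
    and x: "x \<in> Phi q" and "herm q x y \<noteq> 0" and "l \<noteq> 0" and "l ^ (q + 1) \<noteq> 1"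
  shows "isect_num q (orbital q x y) (orbital q x (l *s x)) (orbital q (l *s x) y) \<noteq>
    isect_num q (orbital q x y) (orbital q (l *s x) y) (orbital q x (l *s x))"
proof -
  obtain U where U: "U \<in> GU q" and isect: "\<And>Ri Rj. isect_num q (orbital q x y) Ri Rj =
      card {z \<in> Phi q. (x v* U, z) \<in> Ri \<and> (z, y v* U) \<in> Rj}"
    using isect_num_orbital[OF \<open>q > 0\<close>] by blast
  note herm_U = herm_vector_matrix_GU[OF frob \<open>q > 0\<close>]
  have "l *s x \<in> Phi q"
    using x \<open>l \<noteq> 0\<close> by (simp add: Phi_def herm_smult_left herm_smult_right)
  then have "(l *s x) v* U \<in> {z \<in> Phi q. (x v* U, z) \<in> orbital q x (l *s x) \<and> (z, y v* U) \<in> orbital q (l *s x) y}"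
    using vector_matrix_GU_in_Phi[OF frob \<open>q > 0\<close> U] U unfolding orbital_def by blast
  then have path: "card {z \<in> Phi q. (x v* U, z) \<in> orbital q x (l *s x) \<and> (z, y v* U) \<in> orbital q (l *s x) y} \<noteq> 0"
    by (auto simp: card_eq_0_iff)
  have no_path: "(x v* U, w) \<notin> orbital q (l *s x) y"
    if "(w, y v* U) \<in> orbital q x (l *s x)" for w
  proof
    assume "(x v* U, w) \<in> orbital q (l *s x) y"
    with that obtain V W where V: "V \<in> GU q" "x v* U = (l *s x) v* V" "w = y v* V"
      and W: "W \<in> GU q" "w = x v* W" "y v* U = (l *s x) v* W"
      unfolding orbital_def by auto
    have "herm q x y = herm q (x v* U) (y v* U)"
      by (simp add: herm_U U)
    also have "\<dots> = herm q ((l *s x) v* V) (l *s w)"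
      using V(2) W by (simp add: scalar_vector_matrix_assoc)
    also have "\<dots> = l ^ (q + 1) * herm q x y"
      using V by (simp add: herm_U scalar_vector_matrix_assoc herm_smult_left herm_smult_right mult_ac)
    finally have "(l ^ (q + 1) - 1) * herm q x y = 0"
      by (simp add: algebra_simps)
    then show False
      using assms(4,6) by simp
  qed
  then have empty: "{z \<in> Phi q. (x v* U, z) \<in> orbital q (l *s x) y \<and> (z, y v* U) \<in> orbital q x (l *s x)} = {}"
    by blast
  show ?thesis
    unfolding isect empty card.empty by (rule path)
qed

lemma ex_norm_ne_one:
  assumes "CARD('a) = q ^ 2" and "q \<ge> 3"
  obtains l :: "'a::{field,finite}" where "l \<noteq> 0" and "l ^ (q + 1) \<noteq> 1"
proof -
  have "card {b::'a. b ^ (q + 1) = 1} \<le> q + 1"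
    by (rule card_roots_power_eq_le) simp
  also have "q + 1 < q * q - 1"
  proof -
    have "3 * q \<le> q * q"
      using \<open>q \<ge> 3\<close> by simp
    then show ?thesis
      using \<open>q \<ge> 3\<close> by linarith
  qed
  also have "q * q - 1 = card (UNIV - {0::'a})"
    using assms(1) by (simp add: card_Diff_subset power2_eq_square)
  finally have "\<not> UNIV - {0::'a} \<subseteq> {b. b ^ (q + 1) = 1}"
    by (metis card_mono finite not_le)
  then show ?thesis
    using that by blast
qed

lemma ex_norm_eq_minus_one:
  assumes "prime_power q" and card: "CARD('a) = q ^ 2"
  obtains t :: "'a::{field,finite}" where "t ^ (q + 1) = -1"
proof -
  obtain p k where p: "prime p" and q: "q = p ^ k"
    using assms(1) by (auto simp: prime_power_def)
  have "q \<ge> 2"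
    by (rule prime_power_ge_2) fact
  have "(-1::'a) ^ (q - 1) = 1"
  proof (cases "even q")
    case True
    then have "2 dvd p"
      using q prime_dvd_power[OF two_is_prime_nat] by blast
    then have "p = 2"
      using primes_dvd_imp_eq[OF two_is_prime_nat p] by simp
    then have "CHAR('a) = 2"
      using CHAR_eq_prime_if_card_prime_power[OF p] card by (simp add: q flip: power_mult)
    then show ?thesis
      by (simp add: uminus_CHAR_2)
  next
    case False
    then show ?thesis
      using \<open>q \<ge> 2\<close> by simp
  qed
  moreover have "(q + 1) * (q - 1) = CARD('a) - 1"
    using card \<open>q \<ge> 2\<close> by (simp add: power2_eq_square algebra_simps)
  ultimately have "(-1::'a) \<in> (\<lambda>a. a ^ (q + 1)) ` (UNIV - {0})"
    using power_image_eq_roots_of_unity(1)[where 'a='a, of "q + 1" "q - 1"] \<open>q \<ge> 2\<close>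
    by simp
  then show ?thesis
    using that by (metis imageE)
qed

lemma ex_norm_eq_one_ne_one:
  assumes card: "CARD('a) = q ^ 2" and "q \<ge> 2"
  obtains z :: "'a::{field,finite}" where "z ^ (q + 1) = 1" and "z \<noteq> 1"
proof -
  have "(q - 1) * (q + 1) = CARD('a) - 1"
    using card \<open>q \<ge> 2\<close> by (simp add: power2_eq_square algebra_simps)
  then have "card {z::'a. z ^ (q + 1) = 1} = q + 1"
    using power_image_eq_roots_of_unity(2)[where 'a='a, of "q - 1" "q + 1"] \<open>q \<ge> 2\<close>
    by simp
  moreover have "card {z::'a. z ^ (q + 1) = 1} \<le> 1" if "{z::'a. z ^ (q + 1) = 1} \<subseteq> {1}"
    using card_mono[OF _ that] by simp
  ultimately have "\<not> {z::'a. z ^ (q + 1) = 1} \<subseteq> {1}"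
    using \<open>q \<ge> 2\<close> by linarith
  then show ?thesis
    using that by blast
qed

lemma herm_axis_pair:
  assumes frob: "\<And>a b::'a::field. (a + b) ^ q = a ^ q + b ^ q" and "q > 0" and "i \<noteq> j"
  shows "herm q (axis i 1 + axis j a) (axis i 1 + axis j b) = 1 + a * (b::'a) ^ q"
  using assms by (simp add: herm_add_left herm_add_right[OF frob] herm_axis_axis)

lemma ex_isotropic_pair_nonorthogonal:
  assumes "prime_power q" and card: "CARD('a) = q ^ 2" and "CARD('n) \<ge> 2"
  obtains x y :: "'a::{field,finite}^'n::finite" where "x \<in> Phi q" "y \<in> Phi q" "herm q x y \<noteq> 0"
proof -
  have "q \<ge> 2"
    by (rule prime_power_ge_2) fact
  then have "q > 0"
    by simp
  note frob = power_add_prime_power[OF assms(1,2)]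
  obtain i j :: 'n where "i \<noteq> j"
    using \<open>CARD('n) \<ge> 2\<close>
    by (metis (full_types) card_le_Suc0_iff_eq finite not_less_eq_eq numeral_2_eq_2 order_trans)
  obtain t :: 'a where t: "t ^ (q + 1) = -1"
    using ex_norm_eq_minus_one[OF assms(1,2)] by blast
  obtain z :: 'a where z: "z ^ (q + 1) = 1" "z \<noteq> 1"
    using ex_norm_eq_one_ne_one[OF card \<open>q \<ge> 2\<close>] by blast
  define x :: "'a^'n" where "x = axis i 1 + axis j t"
  define y :: "'a^'n" where "y = axis i 1 + axis j (z * t)"
  note herm = herm_axis_pair[OF frob \<open>q > 0\<close> \<open>i \<noteq> j\<close>]
  have t': "t * t ^ q = -1" and z': "z * z ^ q = 1"
    using t z by simp_all
  have nonzero: "axis i 1 + axis j a \<noteq> (0::'a^'n)" for a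
    using \<open>i \<noteq> j\<close> by (auto simp: vec_eq_iff axis_def intro!: exI[of _ i])
  have "herm q x x = 0"
    using herm[of t t] t' by (simp add: x_def)
  then have "x \<in> Phi q"
    using nonzero by (simp add: Phi_def x_def)
  moreover have "herm q y y = 0"
  proof -
    have "z * t * (z * t) ^ q = (z * z ^ q) * (t * t ^ q)"
      by (simp add: power_mult_distrib mult_ac)
    then show ?thesis
      using herm[of "z * t" "z * t"] t' z' by (simp add: y_def)
  qed
  then have "y \<in> Phi q"
    using nonzero by (simp add: Phi_def y_def)
  moreover have "herm q x y \<noteq> 0"
  proof
    assume "herm q x y = 0"
    moreover have "t * (z * t) ^ q = z ^ q * (t * t ^ q)"
      by (simp add: power_mult_distrib mult_ac)
    ultimately have "z ^ q = 1"
      using herm[of t "z * t"] t' by (simp add: x_def y_def)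
    then show False
      using z' \<open>z \<noteq> 1\<close> by simp
  qed
  ultimately show ?thesis
    using that by blast
qed

lemma q_eq_2_if_commutative_scheme:
  assumes "prime_power q" and card: "CARD('a::{field,finite}) = q ^ 2" and "CARD('n::finite) \<ge> 2"
    and comm: "commutative_scheme q TYPE('a^'n)"
  shows "q = 2"
proof (rule ccontr)
  assume "q \<noteq> 2"
  with prime_power_ge_2[OF assms(1)] have "q \<ge> 3" and "q > 0"
    by simp_all
  obtain x y :: "'a^'n" where x: "x \<in> Phi q" and y: "y \<in> Phi q" and xy: "herm q x y \<noteq> 0"
    using ex_isotropic_pair_nonorthogonal[OF assms(1-3)] by blast
  obtain l :: 'a where l: "l \<noteq> 0" "l ^ (q + 1) \<noteq> 1"
    using ex_norm_ne_one[OF card \<open>q \<ge> 3\<close>] by blast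
  have "l *s x \<in> Phi q"
    using x l by (simp add: Phi_def herm_smult_left herm_smult_right)
  then have "orbital q x y \<in> orbitals q" "orbital q x (l *s x) \<in> orbitals q"
    "orbital q (l *s x) y \<in> orbitals q"
    using x y unfolding orbitals_def by blast+
  then show False
    using comm isect_num_triangle_asymmetric[OF power_add_prime_power[OF assms(1,2)] \<open>q > 0\<close> x xy l]
    unfolding commutative_scheme_def by blast
qed

section \<open>The field with four elements\<close>

lemma prime_power_2: "prime_power 2"
  unfolding prime_power_def by (rule exI[of _ 2], rule exI[of _ 1]) simp

lemma CHAR_gf4: "CARD('a::{field,finite}) = 4 \<Longrightarrow> CHAR('a) = 2"
  using CHAR_eq_prime_if_card_prime_power[of 2 2] by simp

lemma gf4_uminus: "CARD('a::{field,finite}) = 4 \<Longrightarrow> - (a::'a) = a"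
  by (rule uminus_CHAR_2) (rule CHAR_gf4)

lemma gf4_add_self: "CARD('a::{field,finite}) = 4 \<Longrightarrow> (a::'a) + a = 0"
  using gf4_uminus[of a] by (metis add.right_inverse)

lemma gf4_square_add: "CARD('a::{field,finite}) = 4 \<Longrightarrow> ((a::'a) + b) ^ 2 = a ^ 2 + b ^ 2"
  using power_add_prime_power[OF prime_power_2, where 'a='a] by simp

lemma gf4_power_4: "CARD('a::{field,finite}) = 4 \<Longrightarrow> (a::'a) ^ 4 = a"
  using power_card_eq_self[of a] by simp

lemma gf4_square_square: "CARD('a::{field,finite}) = 4 \<Longrightarrow> (a::'a) ^ (2 * 2) = a"
  using gf4_power_4[of a] by simp

lemma gf4_power_3: "CARD('a::{field,finite}) = 4 \<Longrightarrow> (a::'a) \<noteq> 0 \<Longrightarrow> a ^ 3 = 1"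
  using power_card_minus_one_eq_one[of a] by simp

definition gf4_omega :: "'a::field" where
  "gf4_omega = (SOME w. w ^ 2 + w = 1)"

lemma gf4_omega:
  assumes c4: "CARD('a::{field,finite}) = 4"
  shows "(gf4_omega::'a) ^ 2 + gf4_omega = 1"
proof -
  obtain w :: 'a where w: "w \<noteq> 0" "w \<noteq> 1"
  proof -
    have "card {0::'a, 1} \<le> 2"
      by (rule card_insert_le_m1) simp_all
    then have "\<not> UNIV \<subseteq> {0::'a, 1}"
      using card_mono[of "{0::'a, 1}" UNIV] c4 by auto
    then show ?thesis
      using that by blast
  qed
  have "(w - 1) * (w ^ 2 + w + 1) = 0"
    using gf4_power_3[OF c4 w(1)] by (simp add: algebra_simps power2_eq_square power3_eq_cube)
  then have "w ^ 2 + w = - 1"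
    using w(2) by (simp add: eq_neg_iff_add_eq_0)
  then have "w ^ 2 + w = 1"
    using gf4_uminus[OF c4, of 1] by simp
  then show ?thesis
    unfolding gf4_omega_def by (rule someI)
qed

lemma gf4_omega_cube:
  assumes "CARD('a::{field,finite}) = 4"
  shows "(gf4_omega::'a) ^ 3 = 1"
proof (rule gf4_power_3[OF assms])
  show "(gf4_omega::'a) \<noteq> 0"
    using gf4_omega[OF assms] by auto
qed

lemma gf4_ex_square_add_self:
  assumes "CARD('a::{field,finite}) = 4" and "(h::'a) = 0 \<or> h = 1"
  shows "\<exists>s. s ^ 2 + s = h"
  using assms(2)
proof
  assume "h = 1"
  then show ?thesis
    using gf4_omega[OF assms(1)] by blast
qed (auto intro: exI[of _ 0])

lemma herm2_conj_sym:
  "CARD('a::{field,finite}) = 4 \<Longrightarrow> herm 2 y x = herm 2 x (y::'a^'n) ^ 2"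
  by (rule herm_conj_sym) (simp_all add: gf4_square_add gf4_power_4)

lemma herm2_add_right:
  "CARD('a::{field,finite}) = 4 \<Longrightarrow> herm 2 x (y + z) = herm 2 x y + herm 2 x (z::'a^'n)"
  by (rule herm_add_right) (simp add: gf4_square_add)

lemma herm2_sum_right:
  "CARD('a::{field,finite}) = 4 \<Longrightarrow> herm 2 z (sum f A) = (\<Sum>i\<in>A. herm 2 z (f i :: 'a^'n))"
  by (rule herm_sum_right) (simp_all add: gf4_square_add)

lemma herm2_self:
  assumes "CARD('a::{field,finite}) = 4"
  shows "herm 2 x (x::'a^'n) = 0 \<or> herm 2 x x = 1"
proof -
  have "herm 2 x x * (herm 2 x x - 1) = 0"
    using herm2_conj_sym[OF assms, of x x] by (simp add: algebra_simps power2_eq_square)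
  then show ?thesis
    by simp
qed

section \<open>Orthonormal families\<close>

definition orthonormal_on :: "nat \<Rightarrow> 'i set \<Rightarrow> ('i \<Rightarrow> 'a::field^'n) \<Rightarrow> bool" where
  "orthonormal_on q S u \<longleftrightarrow> (\<forall>i\<in>S. \<forall>j\<in>S. herm q (u i) (u j) = (if i = j then 1 else 0))"

lemma orthonormal_on_card_le:
  fixes u :: "'i \<Rightarrow> 'a::field^'n"
  assumes on: "orthonormal_on q S u" and "finite S"
  shows "card S \<le> CARD('n)"
proof -
  have inj: "inj_on u S"
    using on by (auto simp: orthonormal_on_def inj_on_def) (metis one_neq_zero)
  have ind: "vec.independent (u ` S)"
  proof (rule vec.independent_if_scalars_zero)
    show "finite (u ` S)"
      using \<open>finite S\<close> by simp
    fix f x assume sum0: "(\<Sum>y\<in>u ` S. f y *s y) = 0" and x: "x \<in> u ` S"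
    have "herm q (\<Sum>y\<in>u ` S. f y *s y) x = (\<Sum>y\<in>u ` S. f y * herm q y x)"
      by (simp add: herm_sum_left herm_smult_left)
    also have "\<dots> = (\<Sum>y\<in>u ` S. if y = x then f x else 0)"
    proof (rule sum.cong)
      fix y assume "y \<in> u ` S"
      with x obtain i j where "i \<in> S" "j \<in> S" "y = u i" "x = u j"
        by blast
      then show "f y * herm q y x = (if y = x then f x else 0)"
        using on inj by (auto simp: orthonormal_on_def inj_on_def)
    qed simp
    also have "\<dots> = f x"
      using x \<open>finite S\<close> by simp
    finally show "f x = 0"
      using sum0 by simp
  qed
  then have "card (u ` S) \<le> card (cart_basis :: ('a^'n) set)"
    using vec.independent_span_bound[OF finite_cart_basis ind] by simp
  then show ?thesis
    using inj by (simp add: card_image card_cart_basis)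
qed

lemma herm_orthonormal_residual:
  assumes on: "orthonormal_on q S u" and "finite S" and "j \<in> S"
  shows "herm q (v - (\<Sum>i\<in>S. herm q v (u i) *s u i)) (u j) = 0"
proof -
  have "(\<Sum>i\<in>S. herm q v (u i) * herm q (u i) (u j)) = (\<Sum>i\<in>S. if i = j then herm q v (u j) else 0)"
    using on \<open>j \<in> S\<close> by (intro sum.cong) (auto simp: orthonormal_on_def)
  then show ?thesis
    using \<open>finite S\<close> \<open>j \<in> S\<close> by (simp add: herm_diff_left herm_sum_left herm_smult_left)
qed

text \<open>Polarisation over \<open>\<F>\<^sub>4\<close>: \<open>\<langle>v + a w, v + a w\<rangle> = a\<^sup>2 h + a h\<^sup>2\<close> with \<open>h = \<langle>v, w\<rangle>\<close>,
  and taking \<open>a = 1\<close> and \<open>a = \<omega>\<close> forces \<open>h = 0\<close>.\<close>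
lemma gf4_totally_isotropic_orthogonal:
  fixes W :: "('a::{field,finite}^'n) set"
  assumes c4: "CARD('a) = 4"
    and closed: "\<And>v w c. v \<in> W \<Longrightarrow> w \<in> W \<Longrightarrow> v + c *s w \<in> W"
    and iso: "\<And>v. v \<in> W \<Longrightarrow> herm 2 v v = 0" and "v \<in> W" "w \<in> W"
  shows "herm 2 v w = 0"
proof -
  define h where "h = herm 2 v w"
  have iso_line: "a ^ 2 * h + a * h ^ 2 = 0" for a
  proof -
    have "0 = herm 2 (v + a *s w) (v + a *s w)"
      using iso closed \<open>v \<in> W\<close> \<open>w \<in> W\<close> by simp
    also have "\<dots> = herm 2 v v + a ^ 2 * herm 2 v w + a * herm 2 w v + a * a ^ 2 * herm 2 w w"
      by (simp add: herm_add_left herm2_add_right[OF c4] herm_smult_left herm_smult_right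
          algebra_simps)
    also have "\<dots> = a ^ 2 * h + a * h ^ 2"
      using iso \<open>v \<in> W\<close> \<open>w \<in> W\<close> herm2_conj_sym[OF c4, of w v] by (simp add: h_def)
    finally show ?thesis ..
  qed
  from iso_line[of 1] have "h ^ 2 = - h"
    by (simp add: eq_neg_iff_add_eq_0 add.commute)
  then have "h ^ 2 = h"
    using gf4_uminus[OF c4] by simp
  with iso_line[of gf4_omega] have "(gf4_omega ^ 2 + gf4_omega) * h = 0"
    by (simp add: algebra_simps)
  then show ?thesis
    using gf4_omega[OF c4] by (simp add: h_def)
qed

lemma ex_not_in_span_image:
  fixes u :: "'i \<Rightarrow> 'a::field^'n"
  assumes "finite S" and "card S < CARD('n)"
  obtains v where "v \<notin> vec.span (u ` S)"
proof (rule ccontr)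
  assume "\<not> thesis"
  with that have "cart_basis \<subseteq> vec.span (u ` S)"
    by blast
  then have "card (cart_basis :: ('a^'n) set) \<le> card (u ` S)"
    using vec.independent_span_bound[OF _ independent_cart_basis] \<open>finite S\<close> by blast
  also have "\<dots> \<le> card S"
    by (rule card_image_le) fact
  finally show False
    using \<open>card S < CARD('n)\<close> by (simp add: card_cart_basis)
qed

lemma gf4_ex_orthonormal_complement:
  fixes u :: "'i \<Rightarrow> 'a::{field,finite}^'n"
  assumes c4: "CARD('a) = 4" and on: "orthonormal_on 2 S u" and "finite S"
    and "card S < CARD('n)"
  obtains w where "\<And>i. i \<in> S \<Longrightarrow> herm 2 (u i) w = 0" and "herm 2 w w = 1"
proof -
  define P where "P v = v - (\<Sum>i\<in>S. herm 2 v (u i) *s u i)" for v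
  define W where "W = {w. \<forall>i\<in>S. herm 2 w (u i) = 0}"
  have P_W: "P v \<in> W" for v
    unfolding W_def P_def using herm_orthonormal_residual[OF on \<open>finite S\<close>] by blast
  have closed: "v + c *s w \<in> W" if "v \<in> W" "w \<in> W" for v w c
    using that by (simp add: W_def herm_add_left herm_smult_left)
  obtain v0 where "v0 \<notin> vec.span (u ` S)"
    using ex_not_in_span_image[OF \<open>finite S\<close> \<open>card S < CARD('n)\<close>] .
  moreover have "(\<Sum>i\<in>S. herm 2 v0 (u i) *s u i) \<in> vec.span (u ` S)"
    by (intro vec.span_sum vec.span_scale vec.span_base imageI)
  ultimately have v0: "P v0 \<noteq> 0"
    by (auto simp: P_def)
  have "\<exists>w\<in>W. herm 2 w w \<noteq> 0"
  proof (rule ccontr)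
    assume isotropic: "\<not> (\<exists>w\<in>W. herm 2 w w \<noteq> 0)"
    have orth: "herm 2 (P v0) w = 0" if "w \<in> W" for w
      by (rule gf4_totally_isotropic_orthogonal[OF c4 closed]) (use isotropic P_W that in auto)
    have "herm 2 (P v0) v = 0" for v
    proof -
      have "herm 2 (P v0) v = herm 2 (P v0) (P v + (\<Sum>i\<in>S. herm 2 v (u i) *s u i))"
        by (simp add: P_def)
      also have "\<dots> = 0"
        using orth P_W[of v0] P_W[of v]
        by (simp add: herm2_add_right[OF c4] herm2_sum_right[OF c4] herm_smult_right W_def)
      finally show ?thesis .
    qed
    then have "P v0 $ k = 0" for k
      using herm_axis_right[of 2 "P v0" k] by simp
    with v0 show False
      by (simp add: vec_eq_iff)
  qed
  then obtain w where "w \<in> W" "herm 2 w w \<noteq> 0"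
    by blast
  moreover have "herm 2 (u i) w = 0" if "i \<in> S" for i
    using \<open>w \<in> W\<close> that herm2_conj_sym[OF c4, of "u i" w] by (simp add: W_def)
  ultimately show ?thesis
    using that herm2_self[OF c4, of w] by blast
qed

lemma gf4_orthonormal_extend:
  fixes u :: "'n \<Rightarrow> 'a::{field,finite}^'n"
  assumes c4: "CARD('a) = 4" and "orthonormal_on 2 S u"
  obtains u' where "orthonormal_on 2 UNIV u'" and "\<And>i. i \<in> S \<Longrightarrow> u' i = u i"
proof -
  have "\<exists>u'. orthonormal_on 2 UNIV u' \<and> (\<forall>i\<in>S. u' i = u i)"
    using assms(2)
  proof (induction "CARD('n) - card S" arbitrary: S u)
    case 0
    then have "S = UNIV"
      by (intro card_seteq) auto
    with 0 show ?case
      by blast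
  next
    case (Suc m)
    then have card_S: "card S < CARD('n)"
      by simp
    then have "S \<noteq> UNIV"
      by auto
    then obtain k where "k \<notin> S"
      by blast
    obtain w where w: "\<And>i. i \<in> S \<Longrightarrow> herm 2 (u i) w = 0" "herm 2 w w = 1"
      using gf4_ex_orthonormal_complement[OF c4 Suc.prems finite card_S] by blast
    have "herm 2 w (u i) = 0" if "i \<in> S" for i
      using w(1)[OF that] herm2_conj_sym[OF c4, of w "u i"] by simp
    then have "orthonormal_on 2 (insert k S) (u(k := w))"
      using Suc.prems w \<open>k \<notin> S\<close> by (auto simp: orthonormal_on_def)
    moreover have "m = CARD('n) - card (insert k S)"
      using Suc.hyps(2) \<open>k \<notin> S\<close> by simp
    ultimately obtain u' where "orthonormal_on 2 UNIV u'" "\<forall>i\<in>insert k S. u' i = (u(k := w)) i"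
      using Suc.hyps(1) by blast
    then show ?case
      using \<open>k \<notin> S\<close> by auto
  qed
  then show ?thesis
    using that by blast
qed

lemma rows_in_GU:
  fixes u :: "'n \<Rightarrow> 'a::field^'n"
  assumes "orthonormal_on q UNIV u"
  shows "(\<chi> i. u i) \<in> GU q"
proof -
  have "((\<chi> i. u i) ** conj_transpose q (\<chi> i. u i)) $ i $ j = mat 1 $ i $ j" for i j
  proof -
    have "((\<chi> i. u i) ** conj_transpose q (\<chi> i. u i)) $ i $ j = herm q (u i) (u j)"
      by (simp add: matrix_matrix_mult_def conj_transpose_def herm_def)
    also have "\<dots> = mat 1 $ i $ j"
      using assms by (simp add: orthonormal_on_def mat_def)
    finally show ?thesis .
  qed
  then show ?thesis
    by (simp add: GU_def vec_eq_iff)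
qed

lemma axis_vector_matrix_rows: "axis k 1 v* (\<chi> i. u i) = (u k :: 'a::field^'n)"
proof -
  have "(axis k 1 v* (\<chi> i. u i)) $ j = u k $ j" for j
  proof -
    have "axis k 1 $ i * u i $ j = (if i = k then u k $ j else 0)" for i
      by (simp add: axis_def)
    then show ?thesis
      by (simp add: vector_matrix_mult_def)
  qed
  then show ?thesis
    by (simp add: vec_eq_iff)
qed

lemma rows_vector_matrix_conj_transpose:
  fixes u :: "'n \<Rightarrow> 'a::field^'n"
  assumes "orthonormal_on q UNIV u"
  shows "u k v* conj_transpose q (\<chi> i. u i) = axis k 1"
  using assms
  by (simp add: vector_matrix_mult_def conj_transpose_def orthonormal_on_def herm_def axis_def vec_eq_iff)

lemma ex_GU_map_orthonormal_bases:
  fixes u u' :: "'n \<Rightarrow> 'a::field^'n"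
  assumes frob: "\<And>a b::'a. (a + b) ^ q = a ^ q + b ^ q" and "q > 0"
    and inv: "\<And>a::'a. a ^ (q * q) = a"
    and u: "orthonormal_on q UNIV u" and u': "orthonormal_on q UNIV u'"
  obtains T where "T \<in> GU q" and "\<And>k. u k v* T = u' k"
proof
  let ?T = "conj_transpose q (\<chi> i. u i) ** (\<chi> i. u' i)"
  show "?T \<in> GU q"
    by (rule GU_matrix_mult[OF frob \<open>q > 0\<close> conj_transpose_in_GU[OF inv rows_in_GU[OF u]]
          rows_in_GU[OF u']])
  show "u k v* ?T = u' k" for k
    by (simp add: rows_vector_matrix_conj_transpose[OF u] axis_vector_matrix_rows
        flip: vector_matrix_mul_assoc)
qed

lemma gf4_ex_GU_map_orthonormal:
  fixes v v' :: "'i \<Rightarrow> 'a::{field,finite}^'n"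
  assumes c4: "CARD('a) = 4" and "finite I"
    and v: "orthonormal_on 2 I v" and v': "orthonormal_on 2 I v'"
  obtains T where "T \<in> GU 2" and "\<And>i. i \<in> I \<Longrightarrow> v i v* T = v' i"
proof -
  obtain f :: "'i \<Rightarrow> 'n" where f: "inj_on f I"
    using card_le_inj[of I "UNIV :: 'n set"] orthonormal_on_card_le[OF v \<open>finite I\<close>] \<open>finite I\<close>
    by auto
  let ?g = "inv_into I f"
  have reindex: "orthonormal_on 2 (f ` I) (w \<circ> ?g)" if "orthonormal_on 2 I w" for w :: "'i \<Rightarrow> 'a^'n"
    using that f by (auto simp: orthonormal_on_def dest: inj_onD)
  obtain u where u: "orthonormal_on 2 UNIV u" "\<And>k. k \<in> f ` I \<Longrightarrow> u k = (v \<circ> ?g) k"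
    using gf4_orthonormal_extend[OF c4 reindex[OF v]] by blast
  obtain u' where u': "orthonormal_on 2 UNIV u'" "\<And>k. k \<in> f ` I \<Longrightarrow> u' k = (v' \<circ> ?g) k"
    using gf4_orthonormal_extend[OF c4 reindex[OF v']] by blast
  obtain T where T: "T \<in> GU 2" "\<And>k. u k v* T = u' k"
    using ex_GU_map_orthonormal_bases[OF _ _ _ u(1) u'(1)] gf4_square_add[OF c4] gf4_square_square[OF c4]
    by auto
  moreover have "v i v* T = v' i" if "i \<in> I" for i
    using u(2)[of "f i"] u'(2)[of "f i"] T(2)[of "f i"] f that by simp
  ultimately show ?thesis
    using that by blast
qed

section \<open>Normal forms of isotropic pairs over \<open>\<F>\<^sub>4\<close>\<close>

lemma gf4_ex_hyperbolic_partner: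
  fixes x w :: "'a::{field,finite}^'n"
  assumes c4: "CARD('a) = 4" and xx: "herm 2 x x = 0" and xw: "herm 2 x w \<noteq> 0"
  obtains x' where "herm 2 x x' = 1" and "herm 2 x' x' = 0"
    and "\<And>z. herm 2 z x = 0 \<Longrightarrow> herm 2 z x' = herm 2 x w ^ 2 * herm 2 z w"
proof -
  define g where "g = herm 2 x w"
  have g3: "g ^ 3 = 1"
    using gf4_power_3[OF c4] xw by (simp add: g_def)
  have wx: "herm 2 w x = g ^ 2"
    using herm2_conj_sym[OF c4] by (simp add: g_def)
  obtain s where s: "s ^ 2 + s = herm 2 w w"
    using gf4_ex_square_add_self[OF c4 herm2_self[OF c4]] by blast
  define x' where "x' = g *s w + s *s x"
  have "herm 2 x x' = g ^ 3"
    by (simp add: x'_def herm2_add_right[OF c4] herm_smult_right xx g_def power2_eq_square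
        power3_eq_cube mult_ac)
  moreover have "herm 2 x' x' = g ^ 3 * (herm 2 w w + s ^ 2 + s)"
    by (simp add: x'_def herm2_add_right[OF c4] herm_add_left herm_smult_right herm_smult_left
        wx xx g_def[symmetric] power2_eq_square power3_eq_cube algebra_simps)
  moreover have "herm 2 w w + s ^ 2 + s = 0"
    using s gf4_add_self[OF c4, of "herm 2 w w"] by (simp add: add.assoc)
  moreover have "herm 2 z x' = g ^ 2 * herm 2 z w" if "herm 2 z x = 0" for z
    using that by (simp add: x'_def herm2_add_right[OF c4] herm_smult_right)
  ultimately show ?thesis
    using that g3 by (simp add: g_def)
qed

lemma gf4_hyperbolic_pair_orthonormal:
  fixes x x' :: "'a::{field,finite}^'n"
  assumes c4: "CARD('a) = 4" and xx: "herm 2 x x = 0" and x'x': "herm 2 x' x' = 0"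
    and xx': "herm 2 x x' = 1"
  defines "ua \<equiv> x' + gf4_omega *s x" and "ub \<equiv> x' + gf4_omega ^ 2 *s x"
  shows "herm 2 ua ua = 1" "herm 2 ub ub = 1" "herm 2 ua ub = 0" "herm 2 ub ua = 0"
    and "ua + ub = x" and "gf4_omega ^ 2 *s ua + gf4_omega *s ub = x'"
proof -
  have x'x: "herm 2 x' x = 1"
    using herm2_conj_sym[OF c4, of x' x] xx' by simp
  have w1: "(gf4_omega::'a) ^ 2 + gf4_omega = 1" and w3: "(gf4_omega::'a) ^ 3 = 1"
    and w4: "(gf4_omega::'a) ^ 4 = gf4_omega"
    using gf4_omega[OF c4] gf4_omega_cube[OF c4] gf4_power_4[OF c4] by blast+
  have two: "a + a = 0" for a :: 'a
    by (rule gf4_add_self[OF c4])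
  have herm_line: "herm 2 (x' + a *s x) (x' + b *s x) = b ^ 2 + a" for a b :: 'a
    by (simp add: herm2_add_right[OF c4] herm_add_left herm_smult_right herm_smult_left xx x'x' xx' x'x)
  show "herm 2 ua ua = 1"
    unfolding ua_def herm_line using w1 .
  show "herm 2 ub ub = 1"
    unfolding ub_def herm_line using w1 w4 by (simp add: add.commute flip: power_mult)
  show "herm 2 ua ub = 0"
    unfolding ua_def ub_def herm_line using w4 two by (simp flip: power_mult)
  show "herm 2 ub ua = 0"
    unfolding ua_def ub_def herm_line using two by simp
  have "a + gf4_omega * b + (a + gf4_omega ^ 2 * b) = b" for a b :: 'a
  proof -
    have "a + gf4_omega * b + (a + gf4_omega ^ 2 * b) = (a + a) + (gf4_omega ^ 2 + gf4_omega) * b"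
      by (simp add: algebra_simps)
    then show ?thesis
      using two w1 by simp
  qed
  then show "ua + ub = x"
    by (simp add: ua_def ub_def vec_eq_iff)
  have "gf4_omega ^ 2 * (a + gf4_omega * b) + gf4_omega * (a + gf4_omega ^ 2 * b) = a" for a b :: 'a
  proof -
    have "gf4_omega ^ 2 * (a + gf4_omega * b) + gf4_omega * (a + gf4_omega ^ 2 * b) =
        (gf4_omega ^ 2 + gf4_omega) * a + (gf4_omega ^ 3 * b + gf4_omega ^ 3 * b)"
      by (simp add: algebra_simps power2_eq_square power3_eq_cube)
    then show ?thesis
      using two w1 by simp
  qed
  then show "gf4_omega ^ 2 *s ua + gf4_omega *s ub = x'"
    by (simp add: ua_def ub_def vec_eq_iff)
qed

lemma orthonormal_on_pair:
  "orthonormal_on q {0, 1} ((!) [a, b]) \<longleftrightarrow>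
    herm q a a = 1 \<and> herm q b b = 1 \<and> herm q a b = 0 \<and> herm q b a = 0"
  by (auto simp: orthonormal_on_def)

lemma gf4_isotropic_normal_form:
  fixes x :: "'a::{field,finite}^'n"
  assumes c4: "CARD('a) = 4" and x: "x \<in> Phi 2"
  obtains ua ub where "orthonormal_on 2 {0, 1} ((!) [ua, ub])" and "x = ua + ub"
proof -
  obtain k where "x $ k \<noteq> 0"
    using x by (auto simp: Phi_def vec_eq_iff)
  then have "herm 2 x (axis k 1) \<noteq> 0"
    by (simp add: herm_axis_right)
  moreover have xx: "herm 2 x x = 0"
    using x by (simp add: Phi_def)
  ultimately obtain x' where "herm 2 x x' = 1" "herm 2 x' x' = 0"
    using gf4_ex_hyperbolic_partner[OF c4] by metis
  note pair = gf4_hyperbolic_pair_orthonormal[OF c4 xx this(2,1)]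
  show ?thesis
  proof (rule that)
    show "orthonormal_on 2 {0, 1} ((!) [x' + gf4_omega *s x, x' + gf4_omega ^ 2 *s x])"
      unfolding orthonormal_on_pair using pair(1-4) by blast
  qed (rule pair(5)[symmetric])
qed

lemma gf4_isotropic_pair_normal_form_nonorthogonal:
  fixes x y :: "'a::{field,finite}^'n"
  assumes c4: "CARD('a) = 4" and x: "x \<in> Phi 2" and y: "y \<in> Phi 2"
    and c: "herm 2 x y = c" "c \<noteq> 0"
  obtains ua ub where "orthonormal_on 2 {0, 1} ((!) [ua, ub])" and "x = ua + ub"
    and "y = c ^ 2 *s (gf4_omega ^ 2 *s ua + gf4_omega *s ub)"
proof -
  have c3: "c ^ 3 = 1"
    by (rule gf4_power_3[OF c4 c(2)])
  define y1 where "y1 = c *s y"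
  have xx: "herm 2 x x = 0" and yy: "herm 2 y y = 0"
    using x y by (simp_all add: Phi_def)
  have "herm 2 x y1 = c ^ 3"
    by (simp add: y1_def herm_smult_right c(1) power2_eq_square power3_eq_cube)
  then have xy1: "herm 2 x y1 = 1"
    using c3 by simp
  have y1y1: "herm 2 y1 y1 = 0"
    by (simp add: y1_def herm_smult_right herm_smult_left yy)
  note pair = gf4_hyperbolic_pair_orthonormal[OF c4 xx y1y1 xy1]
  show ?thesis
  proof (rule that)
    show "orthonormal_on 2 {0, 1} ((!) [y1 + gf4_omega *s x, y1 + gf4_omega ^ 2 *s x])"
      unfolding orthonormal_on_pair using pair(1-4) by blast
    show "x = y1 + gf4_omega *s x + (y1 + gf4_omega ^ 2 *s x)"
      by (rule pair(5)[symmetric])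
    have "y = c ^ 2 *s y1"
      using c3 by (simp add: y1_def power2_eq_square power3_eq_cube mult_ac)
    then show "y = c ^ 2 *s (gf4_omega ^ 2 *s (y1 + gf4_omega *s x) + gf4_omega *s (y1 + gf4_omega ^ 2 *s x))"
      by (simp only: pair(6))
  qed
qed

lemma neq_smult_swap:
  fixes x y :: "'a::field^'n"
  assumes "x \<noteq> 0" and "\<And>l. y \<noteq> l *s x"
  shows "x \<noteq> l *s y"
proof
  assume "x = l *s y"
  moreover from this \<open>x \<noteq> 0\<close> have "l \<noteq> 0"
    by auto
  ultimately have "y = inverse l *s x"
    by simp
  with assms(2) show False
    by blast
qed

lemma gf4_ex_separating_vector:
  fixes x y :: "'a::{field,finite}^'n"
  assumes c4: "CARD('a) = 4" and "x \<noteq> 0" and indep: "\<And>l. y \<noteq> l *s x"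
  obtains w where "herm 2 x w \<noteq> 0" and "herm 2 y w = 0"
proof -
  obtain j k where jk: "y $ j * x $ k \<noteq> y $ k * x $ j"
  proof (rule ccontr)
    assume "\<not> thesis"
    with that have cross: "y $ j * x $ k = y $ k * x $ j" for j k
      by blast
    obtain k where k: "x $ k \<noteq> 0"
      using \<open>x \<noteq> 0\<close> by (auto simp: vec_eq_iff)
    have "y = (y $ k / x $ k) *s x"
      using cross[of _ k] k by (simp add: vec_eq_iff field_simps)
    with indep show False
      by blast
  qed
  define w where "w = (y $ j) ^ 2 *s axis k 1 + (y $ k) ^ 2 *s axis j 1"
  have herm_w: "herm 2 z w = y $ j * z $ k + y $ k * z $ j" for z
    by (simp add: w_def herm2_add_right[OF c4] herm_smult_right herm_axis_right gf4_power_4[OF c4]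
        mult_ac flip: power_mult)
  have "herm 2 x w \<noteq> 0"
  proof
    assume "herm 2 x w = 0"
    then have "y $ j * x $ k = - (y $ k * x $ j)"
      by (simp add: herm_w eq_neg_iff_add_eq_0)
    with jk show False
      using gf4_uminus[OF c4, of "y $ k * x $ j"] by simp
  qed
  moreover have "herm 2 y w = 0"
    by (simp only: herm_w mult.commute[of "y $ k"] gf4_add_self[OF c4])
  ultimately show ?thesis
    using that by blast
qed

lemma gf4_ex_orthogonal_hyperbolic_partners:
  fixes x y :: "'a::{field,finite}^'n"
  assumes c4: "CARD('a) = 4" and x: "x \<in> Phi 2" and y: "y \<in> Phi 2" and xy: "herm 2 x y = 0"
    and indep: "\<And>l. y \<noteq> l *s x"
  obtains x' y' where "herm 2 x x' = 1" "herm 2 x' x' = 0" "herm 2 y y' = 1" "herm 2 y' y' = 0"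
    and "herm 2 x' y = 0" "herm 2 x y' = 0" "herm 2 x' y' = 0"
proof -
  have xx: "herm 2 x x = 0" and "x \<noteq> 0" and yy: "herm 2 y y = 0" and "y \<noteq> 0"
    using x y by (auto simp: Phi_def)
  note sym = herm2_conj_sym[OF c4]
  have yx: "herm 2 y x = 0"
    using sym[of y x] xy by simp
  obtain w1 where w1: "herm 2 x w1 \<noteq> 0" "herm 2 y w1 = 0"
    using gf4_ex_separating_vector[OF c4 \<open>x \<noteq> 0\<close> indep] by blast
  obtain x' where x': "herm 2 x x' = 1" "herm 2 x' x' = 0"
    and x'_perp: "\<And>z. herm 2 z x = 0 \<Longrightarrow> herm 2 z x' = herm 2 x w1 ^ 2 * herm 2 z w1"
    using gf4_ex_hyperbolic_partner[OF c4 xx w1(1)] by blast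
  have yx': "herm 2 y x' = 0"
    using x'_perp[OF yx] w1(2) by simp
  obtain w2 where w2: "herm 2 y w2 \<noteq> 0" "herm 2 x w2 = 0"
    using gf4_ex_separating_vector[OF c4 \<open>y \<noteq> 0\<close> neq_smult_swap[OF \<open>x \<noteq> 0\<close> indep]] by blast
  \<comment> \<open>correct \<open>w2\<close> along \<open>x\<close> so that it also becomes orthogonal to \<open>x'\<close>\<close>
  define w3 where "w3 = w2 + (herm 2 x' w2) ^ 2 *s x"
  have "herm 2 x' w3 = herm 2 x' w2 + herm 2 x' w2"
    using sym[of x' x] x'(1)
    by (simp add: w3_def herm2_add_right[OF c4] herm_smult_right gf4_power_4[OF c4] flip: power_mult)
  then have x'w3: "herm 2 x' w3 = 0"
    by (simp only: gf4_add_self[OF c4])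
  have yw3: "herm 2 y w3 \<noteq> 0" and xw3: "herm 2 x w3 = 0"
    using w2 yx xx by (simp_all add: w3_def herm2_add_right[OF c4] herm_smult_right)
  obtain y' where y': "herm 2 y y' = 1" "herm 2 y' y' = 0"
    and y'_perp: "\<And>z. herm 2 z y = 0 \<Longrightarrow> herm 2 z y' = herm 2 y w3 ^ 2 * herm 2 z w3"
    using gf4_ex_hyperbolic_partner[OF c4 yy yw3] by blast
  have "herm 2 x y' = 0" and "herm 2 x' y' = 0"
    using y'_perp[OF xy] y'_perp[of x'] sym[of x' y] yx' xw3 x'w3 by simp_all
  moreover have "herm 2 x' y = 0"
    using sym[of x' y] yx' by simp
  ultimately show ?thesis
    using that x' y' by blast
qed

lemma gf4_isotropic_pair_normal_form_orthogonal:
  fixes x y :: "'a::{field,finite}^'n"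
  assumes c4: "CARD('a) = 4" and x: "x \<in> Phi 2" and y: "y \<in> Phi 2" and xy: "herm 2 x y = 0"
    and indep: "\<And>l. y \<noteq> l *s x"
  obtains ua ub uc ud where "orthonormal_on 2 {0, 1, 2, 3} ((!) [ua, ub, uc, ud])"
    and "x = ua + ub" and "y = uc + ud"
proof -
  obtain x' y' where x': "herm 2 x x' = 1" "herm 2 x' x' = 0" and y': "herm 2 y y' = 1" "herm 2 y' y' = 0"
    and x'y: "herm 2 x' y = 0" and xy': "herm 2 x y' = 0" and x'y': "herm 2 x' y' = 0"
    using gf4_ex_orthogonal_hyperbolic_partners[OF assms] by blast
  have xx: "herm 2 x x = 0" and yy: "herm 2 y y = 0"
    using x y by (simp_all add: Phi_def)
  note sym = herm2_conj_sym[OF c4]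
  have cross: "herm 2 (p + a *s p') (r + b *s r') = 0"
    if "herm 2 p r = 0" "herm 2 p r' = 0" "herm 2 p' r = 0" "herm 2 p' r' = 0"
    for p p' r r' :: "'a^'n" and a b :: 'a
    using that by (simp add: herm2_add_right[OF c4] herm_add_left herm_smult_left herm_smult_right)
  have cross_xy: "herm 2 (x' + a *s x) (y' + b *s y) = 0" for a b
    by (rule cross) (use x'y' x'y xy' xy in simp_all)
  have cross_yx: "herm 2 (y' + a *s y) (x' + b *s x) = 0" for a b
    by (rule cross) (use sym[of y' x'] sym[of y' x] sym[of y x'] sym[of y x] x'y' xy' x'y xy in simp_all)
  note hx = gf4_hyperbolic_pair_orthonormal[OF c4 xx x'(2,1)]
  note hy = gf4_hyperbolic_pair_orthonormal[OF c4 yy y'(2,1)]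
  show ?thesis
  proof (rule that)
    show "orthonormal_on 2 {0, 1, 2, 3}
        ((!) [x' + gf4_omega *s x, x' + gf4_omega ^ 2 *s x, y' + gf4_omega *s y, y' + gf4_omega ^ 2 *s y])"
      using hx(1-4) hy(1-4) cross_xy cross_yx by (simp add: orthonormal_on_def)
  qed (simp_all only: hx(5) hy(5))
qed

section \<open>Commutativity for \<open>q = 2\<close>\<close>

lemma gf4_ex_GU_swap_vec_conj_proportional:
  fixes x y :: "'a::{field,finite}^'n"
  assumes c4: "CARD('a) = 4" and x: "x \<in> Phi 2" and y: "y \<in> Phi 2" and "y = l *s x"
  obtains T where "T \<in> GU 2" and "x v* T = vec_conj 2 y" and "y v* T = vec_conj 2 x"
proof -
  have "l \<noteq> 0"
    using x y \<open>y = l *s x\<close> by (auto simp: Phi_def)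
  have conj_x: "vec_conj 2 x = l *s vec_conj 2 y"
    using gf4_power_3[OF c4 \<open>l \<noteq> 0\<close>] \<open>y = l *s x\<close>
    by (simp add: vec_conj_smult power2_eq_square power3_eq_cube mult_ac)
  obtain ua ub where u: "orthonormal_on 2 {0, 1} ((!) [ua, ub])" "x = ua + ub"
    using gf4_isotropic_normal_form[OF c4 x] by blast
  obtain ua' ub' where u': "orthonormal_on 2 {0, 1} ((!) [ua', ub'])" "vec_conj 2 y = ua' + ub'"
    using gf4_isotropic_normal_form[OF c4 vec_conj_in_Phi[OF gf4_square_square[OF c4] y]] by blast
  obtain T where T: "T \<in> GU 2" "\<And>i. i \<in> {0, 1} \<Longrightarrow> [ua, ub] ! i v* T = [ua', ub'] ! i"
    using gf4_ex_GU_map_orthonormal[OF c4 _ u(1) u'(1)] by blast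
  have "x v* T = vec_conj 2 y"
    using T(2)[of 0] T(2)[of 1] u(2) u'(2) by (simp add: vector_matrix_left_distrib)
  with T(1) show ?thesis
    using that \<open>y = l *s x\<close> conj_x by (simp add: scalar_vector_matrix_assoc)
qed

lemma gf4_ex_GU_swap_vec_conj_nonorthogonal:
  fixes x y :: "'a::{field,finite}^'n"
  assumes c4: "CARD('a) = 4" and x: "x \<in> Phi 2" and y: "y \<in> Phi 2" and "herm 2 x y \<noteq> 0"
  obtains T where "T \<in> GU 2" and "x v* T = vec_conj 2 y" and "y v* T = vec_conj 2 x"
proof -
  note inv = gf4_square_square[OF c4]
  define c where "c = herm 2 x y"
  have "c \<noteq> 0" and c': "herm 2 (vec_conj 2 y) (vec_conj 2 x) = c"
    using \<open>herm 2 x y \<noteq> 0\<close> herm_vec_conj[OF inv] by (simp_all add: c_def)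
  obtain ua ub where u: "orthonormal_on 2 {0, 1} ((!) [ua, ub])" "x = ua + ub"
    "y = c ^ 2 *s (gf4_omega ^ 2 *s ua + gf4_omega *s ub)"
    using gf4_isotropic_pair_normal_form_nonorthogonal[OF c4 x y c_def[symmetric] \<open>c \<noteq> 0\<close>] by blast
  obtain ua' ub' where u': "orthonormal_on 2 {0, 1} ((!) [ua', ub'])" "vec_conj 2 y = ua' + ub'"
    "vec_conj 2 x = c ^ 2 *s (gf4_omega ^ 2 *s ua' + gf4_omega *s ub')"
    using gf4_isotropic_pair_normal_form_nonorthogonal[OF c4 vec_conj_in_Phi[OF inv y]
        vec_conj_in_Phi[OF inv x] c' \<open>c \<noteq> 0\<close>] by blast
  obtain T where T: "T \<in> GU 2" "\<And>i. i \<in> {0, 1} \<Longrightarrow> [ua, ub] ! i v* T = [ua', ub'] ! i"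
    using gf4_ex_GU_map_orthonormal[OF c4 _ u(1) u'(1)] by blast
  show ?thesis
    using that[OF T(1)] T(2)[of 0] T(2)[of 1] u(2,3) u'(2,3)
    by (simp add: vector_matrix_left_distrib scalar_vector_matrix_assoc)
qed

lemma gf4_ex_GU_swap_vec_conj_orthogonal:
  fixes x y :: "'a::{field,finite}^'n"
  assumes c4: "CARD('a) = 4" and x: "x \<in> Phi 2" and y: "y \<in> Phi 2" and xy: "herm 2 x y = 0"
    and indep: "\<And>l. y \<noteq> l *s x"
  obtains T where "T \<in> GU 2" and "x v* T = vec_conj 2 y" and "y v* T = vec_conj 2 x"
proof -
  note inv = gf4_square_square[OF c4]
  have conj_indep: "vec_conj 2 x \<noteq> l *s vec_conj 2 y" for l
  proof
    assume "vec_conj 2 x = l *s vec_conj 2 y"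
    then have "x = l ^ 2 *s y"
      using vec_conj_vec_conj[OF inv] by (metis vec_conj_smult)
    moreover have "x \<noteq> 0"
      using x by (simp add: Phi_def)
    ultimately show False
      using neq_smult_swap[OF _ indep] by blast
  qed
  have c': "herm 2 (vec_conj 2 y) (vec_conj 2 x) = 0"
    using herm_vec_conj[OF inv, of y x] xy by simp
  obtain ua ub uc ud where u: "orthonormal_on 2 {0, 1, 2, 3} ((!) [ua, ub, uc, ud])"
    "x = ua + ub" "y = uc + ud"
    using gf4_isotropic_pair_normal_form_orthogonal[OF c4 x y xy indep] by blast
  obtain ua' ub' uc' ud' where u': "orthonormal_on 2 {0, 1, 2, 3} ((!) [ua', ub', uc', ud'])"
    "vec_conj 2 y = ua' + ub'" "vec_conj 2 x = uc' + ud'"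
    using gf4_isotropic_pair_normal_form_orthogonal[OF c4 vec_conj_in_Phi[OF inv y]
        vec_conj_in_Phi[OF inv x] c' conj_indep] by blast
  obtain T where T: "T \<in> GU 2"
    "\<And>i. i \<in> {0, 1, 2, 3} \<Longrightarrow> [ua, ub, uc, ud] ! i v* T = [ua', ub', uc', ud'] ! i"
    using gf4_ex_GU_map_orthonormal[OF c4 _ u(1) u'(1)] by blast
  show ?thesis
    using that[OF T(1)] T(2)[of 0] T(2)[of 1] T(2)[of 2] T(2)[of 3] u(2,3) u'(2,3)
    by (simp add: vector_matrix_left_distrib)
qed

lemma gf4_ex_GU_swap_vec_conj:
  fixes x y :: "'a::{field,finite}^'n"
  assumes c4: "CARD('a) = 4" and x: "x \<in> Phi 2" and y: "y \<in> Phi 2"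
  obtains T where "T \<in> GU 2" and "x v* T = vec_conj 2 y" and "y v* T = vec_conj 2 x"
proof (cases "\<exists>l. y = l *s x")
  case True
  then show ?thesis
    using gf4_ex_GU_swap_vec_conj_proportional[OF c4 x y] that by blast
next
  case False
  then show ?thesis
    using gf4_ex_GU_swap_vec_conj_nonorthogonal[OF c4 x y] gf4_ex_GU_swap_vec_conj_orthogonal[OF c4 x y]
      that by blast
qed

lemma gf4_orbitals_vec_conj:
  fixes R :: "(('a::{field,finite}^'n) \<times> ('a^'n)) set"
  assumes c4: "CARD('a) = 4" and R: "R \<in> orbitals 2" and pr: "(p, r) \<in> R"
  shows "(vec_conj 2 r, vec_conj 2 p) \<in> R"
proof -
  have frob: "\<And>a b::'a. (a + b) ^ 2 = a ^ 2 + b ^ 2"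
    by (rule gf4_square_add[OF c4])
  obtain T where T: "T \<in> GU 2" "p v* T = vec_conj 2 r" "r v* T = vec_conj 2 p"
    using gf4_ex_GU_swap_vec_conj[OF c4 orbitals_subset_Phi[OF frob _ R pr]] by auto
  show ?thesis
    using orbitals_vector_matrix_GU[OF frob _ R pr T(1)] T(2,3) by simp
qed

theorem commutative_scheme_gf4:
  assumes "CARD('a::{field,finite}) = 4"
  shows "commutative_scheme 2 TYPE('a^'n::finite)"
  by (rule commutative_schemeI_vec_conj)
    (simp_all add: assms gf4_square_add gf4_power_4 gf4_orbitals_vec_conj)

theorem theorem4p1:
  fixes q :: nat
  assumes "prime_power q"
    and "CARD('a::{field,finite}) = q ^ 2"
    and "CARD('n::finite) \<ge> 2"
  shows "commutative_scheme q TYPE('a ^ 'n) \<longleftrightarrow> q = 2"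
proof
  assume "commutative_scheme q TYPE('a ^ 'n)"
  then show "q = 2"
    by (rule q_eq_2_if_commutative_scheme[OF assms])
next
  assume "q = 2"
  with assms(2) show "commutative_scheme q TYPE('a ^ 'n)"
    using commutative_scheme_gf4[where 'a='a and 'n='n] by simp
qed

end
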